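(* For an $L$-layer ADMM-CSNet at initialization (all weight entries i.i.d. $\mathcal N(0,1)$), for any $l\in[L]$ and $i\in[m]$: $|z_i^l|\le\ln(m)+L_\sigma|u_i^{l-1}|+|\sigma(0)|$ with probability at least $1-2e^{-c^l_{\mathbf z}\ln^2(m)}$ for some constant $c^l_{\mathbf z}>0$, and $|u_i^l|\le\ln(m)+|u_i^{l-1}|+|z_i^l|$ with probability at least $1-2e^{-c^l_{\mathbf u}\ln^2(m)}$ for some constant $c^l_{\mathbf u}>0$.
   Context: Fix $\lambda>0$ and $\sigma(x)=\log(1+e^{x-\lambda})-\log(1+e^{-x-\lambda})$ (componentwise), $L_\sigma$-Lipschitz. ADMM-CSNet: input $\mathbf y\in\mathbb R^n$ with $|y_i|\le C_y$, initial $\mathbf z^0,\mathbf u^0\in\mathbb R^m$ with $|z^0_i|\le C_z$, $|u^0_i|\le C_u$; for $l\in[L]$, $\mathbf x^l=\frac1{\sqrt n}W_1^l\mathbf y+\frac1{\sqrt m}W_2^l(\mathbf z^{l-1}-\mathbf u^{l-1})$, $\mathbf z^l=\sigma(\mathbf x^l+\mathbf u^{l-1})$, $\mathbf u^l=\mathbf u^{l-1}+\mathbf x^l-\mathbf z^l$, with $W_1^l\in\mathbb R^{m\times n}$, $W_2^l\in\mathbb R^{m\times m}$. *)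

theory Defs
  imports "HOL-Probability.Probability"
begin

definition act :: "real \<Rightarrow> real \<Rightarrow> real" where
  "act lam x = ln (1 + exp (x - lam)) - ln (1 + exp (- x - lam))"

text \<open>Weight index: (l, k, j, r). k = 0: entry (j,r) of W_1^l (m x n);
  k = 1: entry (j,r) of W_2^l (m x m). Layers l = 1..L.\<close>
definition weight_idx :: "nat \<Rightarrow> nat \<Rightarrow> nat \<Rightarrow> (nat \<times> nat \<times> nat \<times> nat) set" where
  "weight_idx L n m =
     {(l, 0, j, r) | l j r. 1 \<le> l \<and> l \<le> L \<and> j < m \<and> r < n}
   \<union> {(l, 1, j, r) | l j r. 1 \<le> l \<and> l \<le> L \<and> j < m \<and> r < m}"

definition weight_space :: "nat \<Rightarrow> nat \<Rightarrow> nat \<Rightarrow> (nat \<times> nat \<times> nat \<times> nat \<Rightarrow> real) measure" where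
  "weight_space L n m = PiM (weight_idx L n m) (\<lambda>_. std_normal_distribution)"

fun admm :: "real \<Rightarrow> nat \<Rightarrow> nat \<Rightarrow> (nat \<Rightarrow> real) \<Rightarrow> (nat \<Rightarrow> real) \<Rightarrow> (nat \<Rightarrow> real)
    \<Rightarrow> (nat \<times> nat \<times> nat \<times> nat \<Rightarrow> real) \<Rightarrow> nat \<Rightarrow> (nat \<Rightarrow> real) \<times> (nat \<Rightarrow> real)" where
  "admm lam n m y z0 u0 W 0 = (z0, u0)"
| "admm lam n m y z0 u0 W (Suc l) =
    (let (z, u) = admm lam n m y z0 u0 W l;
         x = (\<lambda>i. (1 / sqrt (real n)) * (\<Sum>r<n. W (Suc l, 0, i, r) * y r)
                 + (1 / sqrt (real m)) * (\<Sum>r<m. W (Suc l, 1, i, r) * (z r - u r)));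
         z' = (\<lambda>i. act lam (x i + u i));
         u' = (\<lambda>i. u i + x i - z' i)
     in (z', u'))"

definition zl where "zl lam n m y z0 u0 W l = fst (admm lam n m y z0 u0 W l)"
definition ul where "ul lam n m y z0 u0 W l = snd (admm lam n m y z0 u0 W l)"

end

theory Submission
  imports Defs
begin

(*
  Write x^l_i = (W_1^l y)_i / sqrt n + (W_2^l (z^(l-1) - u^(l-1)))_i / sqrt m as a linear form in
  row i of layer l.  Its coefficients depend only on the layers below l, and their squares sum to
  |y|^2/n + |z^(l-1) - u^(l-1)|^2/m.  So, conditionally on the layers below, x^l_i is a centred
  Gaussian, whence E exp((x^l_i)^2/(4S)) <= sqrt 2 as soon as that variance is at most S, and by
  independence of the rows E exp(sum_i (x^l_i)^2/(4S)) <= sqrt 2^m.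

  Call layer k good if this variance is at most S_k = 91^k (1 + C_y^2 + (C_z + C_u)^2) and
  |u^k|^2 <= m S_k.  By Chernoff, a good layer is followed by |x^(k+1)|^2 > 4 m S_k with
  probability at most (sqrt 2/e)^m <= e^(-m/2), and otherwise, since |sigma t| <= |t|, layer k+1
  is good.  Hence all layers below l are good except with probability (l-1) e^(-m/2), and a
  second Chernoff bound gives |x^l_i| <= ln m except with probability
  (l-1) e^(-m/2) + sqrt 2 e^(-ln^2 m/(4 S)) <= 2 e^(-c ln^2 m).  On that event both claims follow
  from |sigma t| <= |t|, sigma 0 = 0 and L_sigma >= 1.
*)

section \<open>Numerical estimates\<close>

lemma ln_square_le: "1 \<le> x \<Longrightarrow> (ln x)\<^sup>2 \<le> 4 * (x::real)"
proof -
  assume x: "1 \<le> x"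
  have "ln (sqrt x) \<le> sqrt x - 1" using x by (intro ln_le_minus_one) auto
  then have "ln x \<le> 2 * sqrt x" using x by (simp add: ln_sqrt)
  then have "(ln x)\<^sup>2 \<le> (2 * sqrt x)\<^sup>2" using x by (intro power_mono) auto
  then show ?thesis using x by (simp add: power_mult_distrib)
qed

lemma sqrt2_power_mult_exp_le: "sqrt 2 ^ m * exp (- real m) \<le> exp (- real m / 2)"
proof -
  have "sqrt 2 ^ m = exp (ln (sqrt 2)) ^ m" by simp
  also have "\<dots> = exp (real m * (ln 2 / 2))" by (subst exp_of_nat_mult) (simp add: ln_sqrt)
  also have "\<dots> \<le> exp (real m / 2)"
    using ln_2_less_1 by (simp add: mult_left_le)
  finally have "sqrt 2 ^ m * exp (- real m) \<le> exp (real m / 2) * exp (- real m)"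
    by (rule mult_right_mono) simp
  also have "\<dots> = exp (- real m / 2)" by (simp flip: exp_add)
  finally show ?thesis .
qed

lemma power2_le_of_abs_le_sum:
  fixes p a x c :: real
  assumes "\<bar>p\<bar> \<le> c * (\<bar>a\<bar> + \<bar>x\<bar>)"
  shows "p\<^sup>2 \<le> 2 * c\<^sup>2 * (a\<^sup>2 + x\<^sup>2)"
proof -
  have "p\<^sup>2 \<le> c\<^sup>2 * (\<bar>a\<bar> + \<bar>x\<bar>)\<^sup>2"
    using assms abs_le_square_iff[of p "c * (\<bar>a\<bar> + \<bar>x\<bar>)"] by (simp add: power_mult_distrib)
  also have "\<dots> \<le> c\<^sup>2 * (2 * (a\<^sup>2 + x\<^sup>2))"
  proof (rule mult_left_mono)
    have "0 \<le> (\<bar>a\<bar> - \<bar>x\<bar>)\<^sup>2" by simp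
    then show "(\<bar>a\<bar> + \<bar>x\<bar>)\<^sup>2 \<le> 2 * (a\<^sup>2 + x\<^sup>2)"
      unfolding power2_sum power2_diff power2_abs distrib_left by linarith
  qed simp
  finally show ?thesis by (simp add: algebra_simps)
qed

lemma tail_sum_le_two_exp:
  fixes m k :: nat and B p :: real
  assumes m: "1 \<le> m" and B: "1 \<le> B" and p_le_1: "p \<le> 1"
    and p: "p \<le> k * exp (- real m / 2) + sqrt 2 * exp (- (ln m)\<^sup>2 / (4 * B))"
  shows "p \<le> 2 * exp (- (1 / (32 * (real k + 1) * B)) * (ln m)\<^sup>2)"
proof -
  define c where "c = 1 / (32 * (real k + 1) * B)"
  define t where "t = ln (real m)"
  have c_le: "c \<le> 1 / (32 * (real k + 1))" and c_le': "c \<le> 1 / (8 * B)"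
    using B unfolding c_def by (auto intro!: divide_left_mono)
  \<comment> \<open>Unless the bound is trivial, c t^2 > 1/2, which forces m > 4 (k + 1); then each term is
    at most exp (- c t^2).\<close>
  show ?thesis
  proof (cases "2 < exp (c * t\<^sup>2)")
    case False
    then have "1 \<le> 2 * exp (- c * t\<^sup>2)" by (simp add: exp_minus field_simps)
    then show ?thesis using p_le_1 by (simp add: c_def t_def)
  next
    case True
    have ct: "c * t\<^sup>2 \<le> t\<^sup>2 / (32 * (real k + 1))"
      using mult_right_mono[OF c_le, of "t\<^sup>2"] by simp
    have "1/2 < c * t\<^sup>2" using True exp_half_le2 by (smt (verit) exp_le_cancel_iff)
    then have "1/2 < t\<^sup>2 / (32 * (real k + 1))" using ct by linarith
    then have "16 * real k + 16 < t\<^sup>2" by (simp add: field_simps)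
    moreover have "t\<^sup>2 \<le> 4 * m" using ln_square_le m by (simp add: t_def)
    ultimately have k_small: "4 * real k + 4 < real m" by linarith
    have "t\<^sup>2 / (32 * (real k + 1)) \<le> t\<^sup>2 / 32" by (intro divide_left_mono) auto
    then have "c * t\<^sup>2 \<le> m / 8" using ct \<open>t\<^sup>2 \<le> 4 * m\<close> by linarith
    have "real k \<le> exp (3 * real m / 8)"
      using exp_ge_add_one_self[of "3 * real m / 8"] k_small by linarith
    then have "k * exp (- real m / 2) \<le> exp (3 * real m / 8) * exp (- real m / 2)"
      by (intro mult_right_mono) auto
    also have "\<dots> \<le> exp (- c * t\<^sup>2)"
      using \<open>c * t\<^sup>2 \<le> m / 8\<close> by (simp add: exp_add[symmetric])
    finally have first: "k * exp (- real m / 2) \<le> exp (- c * t\<^sup>2)" .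
    have "2 * c * t\<^sup>2 \<le> t\<^sup>2 / (4 * B)"
      using mult_right_mono[OF c_le', of "t\<^sup>2"] by simp
    then have "sqrt 2 * exp (- t\<^sup>2 / (4 * B)) \<le> sqrt 2 * (exp (- c * t\<^sup>2) * exp (- c * t\<^sup>2))"
      by (simp add: exp_add[symmetric])
    also have "\<dots> \<le> 2 * exp (- c * t\<^sup>2) * (1/2)"
      using True sqrt2_less_2 by (simp add: exp_minus field_simps)
    finally show ?thesis using p first by (simp add: c_def t_def)
  qed
qed

section \<open>Exponential square moments of Gaussian linear forms\<close>

abbreviation gaussians :: "'i set \<Rightarrow> ('i \<Rightarrow> real) measure" where
  "gaussians I \<equiv> PiM I (\<lambda>_. std_normal_distribution)"

lemma prob_space_std_normal: "prob_space std_normal_distribution"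
  using real_dist_normal_dist real_distribution_def by blast

lemma prob_space_gaussians: "prob_space (gaussians I)"
  by (intro prob_space_PiM prob_space_std_normal)

lemma product_sigma_finite_std_normal: "product_sigma_finite (\<lambda>_. std_normal_distribution)"
  by (simp add: product_sigma_finite_def prob_space_std_normal prob_space_imp_sigma_finite)

lemma measurable_gaussians_component[measurable]: "(\<lambda>\<omega>. \<omega> i) \<in> borel_measurable (gaussians I)"
proof (cases "i \<in> I")
  case False
  then have "\<omega> i = undefined" if "\<omega> \<in> space (gaussians I)" for \<omega>
    using that by (auto simp: space_PiM PiE_def extensional_def)
  then show ?thesis by (subst measurable_cong[where g = "\<lambda>_. undefined"]) auto
qed simp

lemma distr_gaussians_component: "j \<in> J \<Longrightarrow> distr (gaussians J) borel (\<lambda>\<omega>. \<omega> j) = std_normal_distribution"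
  using distr_PiM_component[OF prob_space_std_normal, of j J]
  by (simp add: distr_cong[of "gaussians J" "gaussians J" borel std_normal_distribution])

lemma distributed_gaussians_component:
  "j \<in> J \<Longrightarrow> distributed (gaussians J) lborel (\<lambda>\<omega>. \<omega> j) std_normal_density"
  unfolding distributed_def
  by (simp add: distr_cong[of "gaussians J" "gaussians J" lborel borel] distr_gaussians_component)

lemma indep_vars_gaussians_components:
  assumes "J \<noteq> {}"
  shows "prob_space.indep_vars (gaussians J) (\<lambda>_. borel) (\<lambda>j \<omega>. \<omega> j) J"
proof -
  interpret prob_space "gaussians J" by (rule prob_space_gaussians)
  have "distr (gaussians J) (PiM J (\<lambda>_. borel)) (\<lambda>\<omega>. \<lambda>j\<in>J. \<omega> j) = distr (gaussians J) (gaussians J) (\<lambda>\<omega>. \<omega>)"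
    by (rule distr_cong) (auto simp: space_PiM intro!: sets_PiM_cong)
  also have "\<dots> = (\<Pi>\<^sub>M j\<in>J. distr (gaussians J) borel (\<lambda>\<omega>. \<omega> j))"
    by (auto simp: distr_id distr_gaussians_component intro!: PiM_cong)
  finally show ?thesis
    using assms by (subst indep_vars_iff_distr_eq_PiM) auto
qed

lemma normal_density_mult_exp_square_le:
  assumes \<sigma>: "0 < \<sigma>" and S: "\<sigma>\<^sup>2 \<le> S"
  shows "normal_density 0 \<sigma> x * exp (x\<^sup>2 / (4 * S)) \<le> sqrt 2 * normal_density 0 (sqrt 2 * \<sigma>) x"
proof -
  have "exp (x\<^sup>2 / (4 * S)) \<le> exp (x\<^sup>2 / (4 * \<sigma>\<^sup>2))"
    using S \<sigma> by (auto intro!: divide_left_mono mult_pos_pos order.strict_trans2[OF _ S])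
  then have "normal_density 0 \<sigma> x * exp (x\<^sup>2 / (4 * S)) \<le> normal_density 0 \<sigma> x * exp (x\<^sup>2 / (4 * \<sigma>\<^sup>2))"
    by (intro mult_left_mono) auto
  also have "\<dots> = sqrt 2 * normal_density 0 (sqrt 2 * \<sigma>) x"
    using \<sigma> by (simp add: normal_density_def power_mult_distrib real_sqrt_mult exp_add[symmetric] field_simps)
  finally show ?thesis .
qed

lemma nn_integral_exp_square_linear_comb_le:
  fixes a :: "'i \<Rightarrow> real"
  assumes J: "finite J" and a: "(\<Sum>j\<in>J. (a j)\<^sup>2) \<le> S"
  shows "(\<integral>\<^sup>+\<omega>. ennreal (exp ((\<Sum>j\<in>J. a j * \<omega> j)\<^sup>2 / (4 * S))) \<partial>gaussians J) \<le> ennreal (sqrt 2)"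
proof -
  interpret P: prob_space "gaussians J" by (rule prob_space_gaussians)
  define J' where "J' = {j\<in>J. a j \<noteq> 0}"
  have J': "J' \<subseteq> J" "finite J'" using J by (auto simp: J'_def)
  have sum_J': "(\<Sum>j\<in>J. a j * \<omega> j) = (\<Sum>j\<in>J'. a j * \<omega> j)" for \<omega>
    using J by (intro sum.mono_neutral_right) (auto simp: J'_def)
  show ?thesis
  proof (cases "J' = {}")
    case True
    then show ?thesis by (simp add: sum_J' P.emeasure_space_1)
  next
    case False
    define \<sigma> where "\<sigma> = sqrt (\<Sum>j\<in>J'. (a j)\<^sup>2)"
    have \<sigma>: "0 < \<sigma>" using False J' by (auto simp: \<sigma>_def J'_def intro!: sum_pos)
    have "\<sigma>\<^sup>2 = (\<Sum>j\<in>J. (a j)\<^sup>2)"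
      using J by (simp add: \<sigma>_def sum_nonneg) (intro sum.mono_neutral_left, auto simp: J'_def)
    with a have \<sigma>_S: "\<sigma>\<^sup>2 \<le> S" by simp
    have "P.indep_vars (\<lambda>_. borel) (\<lambda>j \<omega>. a j * \<omega> j) J"
      using indep_vars_gaussians_components[of J] False J'
      by (intro P.indep_vars_compose2[where Y = "\<lambda>j t. a j * t"]) auto
    then have indep: "P.indep_vars (\<lambda>_. borel) (\<lambda>j \<omega>. a j * \<omega> j) J'"
      using J'(1) by (rule P.indep_vars_subset)
    have "distributed (gaussians J) lborel (\<lambda>\<omega>. a j * \<omega> j) (normal_density 0 \<bar>a j\<bar>)" if "j \<in> J'" for j
      using P.normal_density_affine[OF distributed_gaussians_component, where \<alpha> = "a j" and \<beta> = 0] that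
      by (auto simp: J'_def)
    then have "distributed (gaussians J) lborel (\<lambda>\<omega>. \<Sum>j\<in>J'. a j * \<omega> j) (normal_density 0 \<sigma>)"
      using P.sum_indep_normal[OF J'(2) False indep, of "\<lambda>j. \<bar>a j\<bar>" "\<lambda>_. 0"]
      by (simp add: \<sigma>_def J'_def)
    then have "(\<integral>\<^sup>+\<omega>. ennreal (exp ((\<Sum>j\<in>J. a j * \<omega> j)\<^sup>2 / (4 * S))) \<partial>gaussians J)
        = (\<integral>\<^sup>+x. ennreal (normal_density 0 \<sigma> x) * ennreal (exp (x\<^sup>2 / (4 * S))) \<partial>lborel)"
      unfolding sum_J' by (rule distributed_nn_integral[symmetric]) simp
    also have "\<dots> \<le> (\<integral>\<^sup>+x. ennreal (sqrt 2) * ennreal (normal_density 0 (sqrt 2 * \<sigma>) x) \<partial>lborel)"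
      using normal_density_mult_exp_square_le[OF \<sigma> \<sigma>_S]
      by (intro nn_integral_mono) (simp add: ennreal_mult'[symmetric] ennreal_leI)
    also have "\<dots> = ennreal (sqrt 2) * (\<integral>\<^sup>+x. ennreal (normal_density 0 (sqrt 2 * \<sigma>) x) \<partial>lborel)"
      by (rule nn_integral_cmult) simp
    also have "(\<integral>\<^sup>+x. ennreal (normal_density 0 (sqrt 2 * \<sigma>) x) \<partial>lborel) = 1"
      using \<sigma> by (subst nn_integral_eq_integral) auto
    finally show ?thesis by simp
  qed
qed

lemma nn_integral_exp_square_conditional_le:
  fixes F :: "('i \<Rightarrow> real) \<Rightarrow> ennreal" and a :: "('i \<Rightarrow> real) \<Rightarrow> 'i \<Rightarrow> real"
  assumes I: "finite I" and JI: "J \<subseteq> I"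
    and F_meas: "F \<in> borel_measurable (gaussians I)"
    and G_meas: "(\<lambda>\<omega>. \<Sum>j\<in>J. a \<omega> j * \<omega> j) \<in> borel_measurable (gaussians I)"
    and F_off_J: "\<And>\<omega> \<omega>'. (\<forall>i. i \<notin> J \<longrightarrow> \<omega> i = \<omega>' i) \<Longrightarrow> F \<omega> = F \<omega>'"
    and a_off_J: "\<And>\<omega> \<omega>'. (\<forall>i. i \<notin> J \<longrightarrow> \<omega> i = \<omega>' i) \<Longrightarrow> a \<omega> = a \<omega>'"
    and a_bound: "\<And>\<omega>. \<omega> \<in> space (gaussians I) \<Longrightarrow> F \<omega> \<noteq> 0 \<Longrightarrow> (\<Sum>j\<in>J. (a \<omega> j)\<^sup>2) \<le> S"
  shows "(\<integral>\<^sup>+\<omega>. F \<omega> * ennreal (exp ((\<Sum>j\<in>J. a \<omega> j * \<omega> j)\<^sup>2 / (4 * S))) \<partial>gaussians I)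
           \<le> ennreal (sqrt 2) * (\<integral>\<^sup>+\<omega>. F \<omega> \<partial>gaussians I)"
proof -
  define K where "K = I - J"
  have I_eq: "I = K \<union> J" and disj: "K \<inter> J = {}" using JI by (auto simp: K_def)
  have K: "finite K" and J: "finite J" using I JI by (auto simp: K_def intro: finite_subset)
  note fold = product_sigma_finite.product_nn_integral_fold[OF product_sigma_finite_std_normal disj K J]
  define \<omega>0 :: "'i \<Rightarrow> real" where "\<omega>0 = (\<lambda>j\<in>J. 0)"
  define ext where "ext x = merge K J (x, \<omega>0)" for x
  have "\<omega>0 \<in> space (gaussians J)" by (simp add: \<omega>0_def space_PiM)
  then have ext_meas: "ext \<in> measurable (gaussians K) (gaussians I)"
    unfolding ext_def I_eq by measurable
  have merge_off_J: "\<forall>i. i \<notin> J \<longrightarrow> merge K J (x, y) i = ext x i" for x y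
    by (auto simp: ext_def merge_def K_def)
  have merge_J: "merge K J (x, y) j = y j" if "j \<in> J" for x y j
    using that disj by (auto simp: merge_def)
  have integrand_meas: "(\<lambda>\<omega>. F \<omega> * ennreal (exp ((\<Sum>j\<in>J. a \<omega> j * \<omega> j)\<^sup>2 / (4 * S))))
      \<in> borel_measurable (gaussians (K \<union> J))"
    using F_meas G_meas I_eq by simp
  define E where "E x = (\<integral>\<^sup>+y. ennreal (exp ((\<Sum>j\<in>J. a (ext x) j * y j)\<^sup>2 / (4 * S))) \<partial>gaussians J)" for x
  have E: "E x \<le> ennreal (sqrt 2)" if "x \<in> space (gaussians K)" "F (ext x) \<noteq> 0" for x
    unfolding E_def
  proof (rule nn_integral_exp_square_linear_comb_le[OF J a_bound[OF _ that(2)]])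
    show "ext x \<in> space (gaussians I)"
      using that(1) measurable_space[OF ext_meas] by simp
  qed
  \<comment> \<open>Integrate first over the coordinates in J, on which F and a are constant.\<close>
  have "(\<integral>\<^sup>+\<omega>. F \<omega> * ennreal (exp ((\<Sum>j\<in>J. a \<omega> j * \<omega> j)\<^sup>2 / (4 * S))) \<partial>gaussians I)
     = (\<integral>\<^sup>+x. (\<integral>\<^sup>+y. F (merge K J (x, y))
          * ennreal (exp ((\<Sum>j\<in>J. a (merge K J (x, y)) j * merge K J (x, y) j)\<^sup>2 / (4 * S))) \<partial>gaussians J) \<partial>gaussians K)"
    unfolding I_eq by (rule fold[OF integrand_meas])
  also have "\<dots> = (\<integral>\<^sup>+x. F (ext x) * E x \<partial>gaussians K)"
    by (intro nn_integral_cong)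
      (simp add: E_def F_off_J[OF merge_off_J] a_off_J[OF merge_off_J] merge_J nn_integral_cmult)
  also have "\<dots> \<le> (\<integral>\<^sup>+x. F (ext x) * ennreal (sqrt 2) \<partial>gaussians K)"
  proof (intro nn_integral_mono)
    fix x assume "x \<in> space (gaussians K)"
    then show "F (ext x) * E x \<le> F (ext x) * ennreal (sqrt 2)"
      by (cases "F (ext x) = 0") (simp_all add: E mult_left_mono)
  qed
  also have "\<dots> = ennreal (sqrt 2) * (\<integral>\<^sup>+x. F (ext x) \<partial>gaussians K)"
    using measurable_comp[OF ext_meas F_meas]
    by (subst nn_integral_cmult[symmetric]) (auto simp: comp_def mult.commute)
  also have "(\<integral>\<^sup>+x. F (ext x) \<partial>gaussians K) = (\<integral>\<^sup>+\<omega>. F \<omega> \<partial>gaussians I)"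
  proof -
    have "(\<integral>\<^sup>+\<omega>. F \<omega> \<partial>gaussians I) = (\<integral>\<^sup>+x. (\<integral>\<^sup>+y. F (merge K J (x, y)) \<partial>gaussians J) \<partial>gaussians K)"
      unfolding I_eq by (rule fold) (use F_meas I_eq in simp)
    also have "\<dots> = (\<integral>\<^sup>+x. F (ext x) \<partial>gaussians K)"
      by (simp add: F_off_J[OF merge_off_J] prob_space.emeasure_space_1[OF prob_space_gaussians])
    finally show ?thesis by simp
  qed
  finally show ?thesis .
qed

section \<open>The activation\<close>

lemma act_0 [simp]: "act lam 0 = 0"
  by (simp add: act_def)

lemma act_minus: "act lam (- t) = - act lam t"
  by (simp add: act_def)

lemma act_nonneg_le:
  assumes lam: "0 < lam" and t: "0 \<le> t"
  shows "0 \<le> act lam t \<and> act lam t \<le> t"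
proof
  have "exp (- t - lam) \<le> exp (t - lam)" using t by simp
  then show "0 \<le> act lam t" by (simp add: act_def add_pos_pos)
  have "1 + exp (t - lam) \<le> exp t * (1 + exp (- t - lam))"
  proof -
    have "0 \<le> (exp t - 1) * (1 - exp (- lam))" using lam t by simp
    then show ?thesis by (simp add: algebra_simps flip: exp_add)
  qed
  then have "ln (1 + exp (t - lam)) \<le> ln (exp t * (1 + exp (- t - lam)))"
    by (simp add: add_pos_pos)
  also have "\<dots> = t + ln (1 + exp (- t - lam))"
    using add_pos_pos[OF zero_less_one exp_gt_zero[of "- t - lam"]] by (simp add: ln_mult)
  finally show "act lam t \<le> t" by (simp add: act_def)
qed

lemma abs_act_le: "0 < lam \<Longrightarrow> \<bar>act lam t\<bar> \<le> \<bar>t\<bar>"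
  using act_nonneg_le[of lam t] act_nonneg_le[of lam "- t"] by (cases "0 \<le> t") (auto simp: act_minus)

lemma act_ge:
  assumes lam: "0 < lam" and t: "0 \<le> t"
  shows "t - lam - ln 2 \<le> act lam t"
proof -
  have "ln (exp (t - lam)) \<le> ln (1 + exp (t - lam))"
    by (subst ln_le_cancel_iff) (auto intro: add_pos_pos)
  then have "t - lam \<le> ln (1 + exp (t - lam))" by simp
  moreover have "ln (1 + exp (- t - lam)) \<le> ln 2"
    using lam t by (subst ln_le_cancel_iff) (auto simp: add_pos_pos)
  ultimately show ?thesis by (simp add: act_def)
qed

(* For large t, act lam t is within lam + ln 2 of t, so no Lipschitz constant below 1 is possible. *)
lemma lipschitz_act_ge_1:
  assumes lam: "0 < lam" and lip: "L-lipschitz_on UNIV (act lam)"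
  shows "1 \<le> L"
proof (rule ccontr)
  assume "\<not> 1 \<le> L"
  define t where "t = (lam + ln 2 + 1) / (1 - L)"
  have "0 < lam + ln 2 + 1" using lam ln_2_less_1 ln_gt_zero[of 2] by linarith
  then have t: "0 < t" and t_eq: "t * (1 - L) = lam + ln 2 + 1"
    using \<open>\<not> 1 \<le> L\<close> by (auto simp: t_def)
  have "act lam t \<le> L * t"
    using lipschitz_onD[OF lip, of t 0] act_nonneg_le[OF lam, of t] t by (simp add: dist_real_def)
  with act_ge[OF lam, of t] t have "t * (1 - L) \<le> lam + ln 2" by (simp add: algebra_simps)
  with t_eq show False by simp
qed

lemma act_step_square_le:
  assumes "0 < lam"
  shows "(a + x - act lam (x + a))\<^sup>2 \<le> 18 * (a\<^sup>2 + x\<^sup>2)"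
    and "(act lam (x + a) - (a + x - act lam (x + a)))\<^sup>2 \<le> 18 * (a\<^sup>2 + x\<^sup>2)"
proof -
  have "\<bar>act lam (x + a)\<bar> \<le> \<bar>a\<bar> + \<bar>x\<bar>" using abs_act_le[OF assms, of "x + a"] by linarith
  then have "\<bar>a + x - act lam (x + a)\<bar> \<le> 3 * (\<bar>a\<bar> + \<bar>x\<bar>)"
    and "\<bar>act lam (x + a) - (a + x - act lam (x + a))\<bar> \<le> 3 * (\<bar>a\<bar> + \<bar>x\<bar>)"
    by (smt (verit))+
  from this[THEN power2_le_of_abs_le_sum]
  show "(a + x - act lam (x + a))\<^sup>2 \<le> 18 * (a\<^sup>2 + x\<^sup>2)"
    and "(act lam (x + a) - (a + x - act lam (x + a)))\<^sup>2 \<le> 18 * (a\<^sup>2 + x\<^sup>2)"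
    by simp_all
qed

section \<open>The network at initialization\<close>

lemma weight_space_eq_gaussians: "weight_space L n m = gaussians (weight_idx L n m)"
  by (simp add: weight_space_def)

lemma finite_weight_idx: "finite (weight_idx L n m)"
proof (rule finite_subset)
  show "weight_idx L n m \<subseteq> {..L} \<times> {..1} \<times> {..<m} \<times> {..<n + m}"
    by (auto simp: weight_idx_def)
qed auto

locale admm_net =
  fixes lam :: real and n m L :: nat and y z0 u0 :: "nat \<Rightarrow> real"
  assumes lam_pos: "0 < lam"
begin

abbreviation Z :: "nat \<Rightarrow> (nat \<times> nat \<times> nat \<times> nat \<Rightarrow> real) \<Rightarrow> nat \<Rightarrow> real" where
  "Z k W \<equiv> zl lam n m y z0 u0 W k"

abbreviation U :: "nat \<Rightarrow> (nat \<times> nat \<times> nat \<times> nat \<Rightarrow> real) \<Rightarrow> nat \<Rightarrow> real" where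
  "U k W \<equiv> ul lam n m y z0 u0 W k"

definition X :: "nat \<Rightarrow> (nat \<times> nat \<times> nat \<times> nat \<Rightarrow> real) \<Rightarrow> nat \<Rightarrow> real" where
  "X k W i = 1 / sqrt (real n) * (\<Sum>r<n. W (k, 0, i, r) * y r)
     + 1 / sqrt (real m) * (\<Sum>r<m. W (k, 1, i, r) * (Z (k - 1) W r - U (k - 1) W r))"

lemma Z_0: "Z 0 W = z0" and U_0: "U 0 W = u0"
  by (simp_all add: zl_def ul_def)

lemma Z_Suc: "Z (Suc k) W i = act lam (X (Suc k) W i + U k W i)"
  and U_Suc: "U (Suc k) W i = U k W i + X (Suc k) W i - Z (Suc k) W i"
  by (simp_all add: zl_def ul_def X_def Let_def split: prod.split)

lemma ZU_eq_if_lower_layers_eq: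
  assumes "\<And>l b i r. l \<le> k \<Longrightarrow> W (l, b, i, r) = W' (l, b, i, r)"
  shows "Z k W = Z k W'" "U k W = U k W'"
proof -
  have "admm lam n m y z0 u0 W k = admm lam n m y z0 u0 W' k"
    using assms
  proof (induction k)
    case (Suc k)
    then have "admm lam n m y z0 u0 W k = admm lam n m y z0 u0 W' k" by simp
    with Suc.prems show ?case by (simp add: Let_def split: prod.split)
  qed simp
  then show "Z k W = Z k W'" "U k W = U k W'" by (simp_all add: zl_def ul_def)
qed

definition row :: "nat \<Rightarrow> nat \<Rightarrow> (nat \<times> nat \<times> nat \<times> nat) set" where
  "row k i = (\<lambda>r. (k, 0, i, r)) ` {..<n} \<union> (\<lambda>r. (k, 1, i, r)) ` {..<m}"

definition row_coef :: "nat \<Rightarrow> (nat \<times> nat \<times> nat \<times> nat \<Rightarrow> real) \<Rightarrow> nat \<times> nat \<times> nat \<times> nat \<Rightarrow> real" where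
  "row_coef k W j = (case j of (_, b, _, r) \<Rightarrow>
     if b = 0 then y r / sqrt (real n) else (Z (k - 1) W r - U (k - 1) W r) / sqrt (real m))"

(* Given the layers below k, X k W i is a centred Gaussian with variance x_var k W. *)
definition x_var :: "nat \<Rightarrow> (nat \<times> nat \<times> nat \<times> nat \<Rightarrow> real) \<Rightarrow> real" where
  "x_var k W = (\<Sum>r<n. (y r)\<^sup>2) / real n + (\<Sum>r<m. (Z (k - 1) W r - U (k - 1) W r)\<^sup>2) / real m"

lemma sum_row: "(\<Sum>j\<in>row k i. g j) = (\<Sum>r<n. g (k, 0, i, r)) + (\<Sum>r<m. g (k, 1, i, r))"
  unfolding row_def
  by (subst sum.union_disjoint) (auto simp: sum.reindex inj_on_def)

lemma X_eq_sum_row: "X k W i = (\<Sum>j\<in>row k i. row_coef k W j * W j)"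
  by (simp add: sum_row X_def row_coef_def sum_distrib_left algebra_simps diff_divide_distrib)

lemma sum_row_coef_square: "(\<Sum>j\<in>row k i. (row_coef k W j)\<^sup>2) = x_var k W"
  by (simp add: sum_row x_var_def row_coef_def power_divide sum_divide_distrib)

lemma row_subset_weight_idx: "Suc k \<le> L \<Longrightarrow> i < m \<Longrightarrow> row (Suc k) i \<subseteq> weight_idx L n m"
  by (auto simp: row_def weight_idx_def)

context
  fixes k i :: nat and W W' :: "nat \<times> nat \<times> nat \<times> nat \<Rightarrow> real"
  assumes off_row: "\<And>j. j \<notin> row (Suc k) i \<Longrightarrow> W j = W' j"
begin

lemma eq_off_row_layer: "l \<noteq> Suc k \<Longrightarrow> W (l, b, i', r) = W' (l, b, i', r)"
  and eq_off_row_index: "i' \<noteq> i \<Longrightarrow> W (l, b, i', r) = W' (l, b, i', r)"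
  by (auto intro!: off_row simp: row_def)

lemma ZU_eq_off_row: "Z k W = Z k W'" "U k W = U k W'"
  by (auto intro!: ZU_eq_if_lower_layers_eq eq_off_row_layer)

lemma row_coef_eq_off_row: "row_coef (Suc k) W = row_coef (Suc k) W'"
  by (simp add: row_coef_def ZU_eq_off_row fun_eq_iff)

lemma X_eq_off_row: "r \<noteq> i \<Longrightarrow> X (Suc k) W r = X (Suc k) W' r"
  by (simp add: X_def ZU_eq_off_row eq_off_row_index)

end

lemma measurable_ZU:
  "(\<lambda>W. Z k W r) \<in> borel_measurable (gaussians I) \<and> (\<lambda>W. U k W r) \<in> borel_measurable (gaussians I)"
proof (induction k arbitrary: r)
  case 0
  show ?case by (simp add: Z_0 U_0)
next
  case (Suc k)
  then have [measurable]: "(\<lambda>W. Z k W r) \<in> borel_measurable (gaussians I)"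
    "(\<lambda>W. U k W r) \<in> borel_measurable (gaussians I)" for r
    by simp_all
  have [measurable]: "act lam \<in> borel_measurable borel"
    unfolding act_def by measurable
  have [measurable]: "(\<lambda>W. X (Suc k) W r) \<in> borel_measurable (gaussians I)" for r
    unfolding X_def by simp measurable
  show ?case
    unfolding Z_Suc U_Suc by measurable
qed

lemma measurable_Z [measurable]: "(\<lambda>W. Z k W r) \<in> borel_measurable (gaussians I)"
  and measurable_U [measurable]: "(\<lambda>W. U k W r) \<in> borel_measurable (gaussians I)"
  using measurable_ZU by auto

lemma measurable_X [measurable]: "(\<lambda>W. X k W r) \<in> borel_measurable (gaussians I)"
  unfolding X_def by measurable

lemma sum_square_U_Suc_le:
  "(\<Sum>r<m. (U (Suc k) W r)\<^sup>2) \<le> 18 * ((\<Sum>r<m. (U k W r)\<^sup>2) + (\<Sum>r<m. (X (Suc k) W r)\<^sup>2))"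
proof -
  have "(\<Sum>r<m. (U (Suc k) W r)\<^sup>2) \<le> (\<Sum>r<m. 18 * ((U k W r)\<^sup>2 + (X (Suc k) W r)\<^sup>2))"
    by (intro sum_mono) (simp only: U_Suc Z_Suc act_step_square_le[OF lam_pos])
  then show ?thesis by (simp add: sum_distrib_left sum.distrib)
qed

lemma sum_square_ZU_Suc_le:
  "(\<Sum>r<m. (Z (Suc k) W r - U (Suc k) W r)\<^sup>2) \<le> 18 * ((\<Sum>r<m. (U k W r)\<^sup>2) + (\<Sum>r<m. (X (Suc k) W r)\<^sup>2))"
proof -
  have "(\<Sum>r<m. (Z (Suc k) W r - U (Suc k) W r)\<^sup>2) \<le> (\<Sum>r<m. 18 * ((U k W r)\<^sup>2 + (X (Suc k) W r)\<^sup>2))"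
    by (intro sum_mono) (simp only: U_Suc Z_Suc act_step_square_le[OF lam_pos])
  then show ?thesis by (simp add: sum_distrib_left sum.distrib)
qed

lemma abs_ZU_Suc_le:
  assumes Lsig: "1 \<le> Lsig" and X: "\<bar>X (Suc k) W i\<bar> \<le> t"
  shows "\<bar>Z (Suc k) W i\<bar> \<le> t + Lsig * \<bar>U k W i\<bar> + \<bar>act lam 0\<bar>"
    and "\<bar>U (Suc k) W i\<bar> \<le> t + \<bar>U k W i\<bar> + \<bar>Z (Suc k) W i\<bar>"
proof -
  have "\<bar>Z (Suc k) W i\<bar> \<le> \<bar>X (Suc k) W i\<bar> + \<bar>U k W i\<bar>"
    using abs_act_le[OF lam_pos, of "X (Suc k) W i + U k W i"] by (simp add: Z_Suc)
  moreover have "\<bar>U k W i\<bar> \<le> Lsig * \<bar>U k W i\<bar>"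
    using Lsig by (simp add: mult_le_cancel_right1)
  ultimately show "\<bar>Z (Suc k) W i\<bar> \<le> t + Lsig * \<bar>U k W i\<bar> + \<bar>act lam 0\<bar>"
    using X by simp
  show "\<bar>U (Suc k) W i\<bar> \<le> t + \<bar>U k W i\<bar> + \<bar>Z (Suc k) W i\<bar>"
    using X by (simp add: U_Suc)
qed

end

sublocale admm_net \<subseteq> weights: prob_space "weight_space L n m"
  unfolding weight_space_eq_gaussians by (rule prob_space_gaussians)

(* The factor 91 = 1 + 18 * (1 + 4) comes from good_Suc. *)
definition var_bound :: "real \<Rightarrow> real \<Rightarrow> real \<Rightarrow> nat \<Rightarrow> real" where
  "var_bound Cy Cz Cu k = 91 ^ k * (1 + Cy\<^sup>2 + (Cz + Cu)\<^sup>2)"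

lemma var_bound_ge: "1 + Cy\<^sup>2 + (Cz + Cu)\<^sup>2 \<le> var_bound Cy Cz Cu k"
  using mult_right_mono[OF one_le_power[of "91::real" k], of "1 + Cy\<^sup>2 + (Cz + Cu)\<^sup>2"]
  by (simp add: var_bound_def)

lemma one_le_var_bound: "1 \<le> var_bound Cy Cz Cu k"
  using var_bound_ge[of Cy Cz Cu k] zero_le_power2[of Cy] zero_le_power2[of "Cz + Cu"] by linarith

lemma var_bound_Suc: "var_bound Cy Cz Cu (Suc k) = 91 * var_bound Cy Cz Cu k"
  by (simp add: var_bound_def)

locale admm_net_bounded = admm_net +
  fixes Cy Cz Cu :: real
  assumes m_pos: "0 < m"
    and y_bound: "\<And>r. r < n \<Longrightarrow> \<bar>y r\<bar> \<le> Cy"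
    and z0_bound: "\<And>r. r < m \<Longrightarrow> \<bar>z0 r\<bar> \<le> Cz"
    and u0_bound: "\<And>r. r < m \<Longrightarrow> \<bar>u0 r\<bar> \<le> Cu"
begin

abbreviation B :: "nat \<Rightarrow> real" where
  "B \<equiv> var_bound Cy Cz Cu"

definition good :: "nat \<Rightarrow> (nat \<times> nat \<times> nat \<times> nat \<Rightarrow> real) \<Rightarrow> bool" where
  "good k W \<longleftrightarrow> x_var (Suc k) W \<le> B k \<and> (\<Sum>r<m. (U k W r)\<^sup>2) \<le> m * B k"

lemma measurable_good [measurable]: "Measurable.pred (gaussians I) (good k)"
  unfolding good_def x_var_def by measurable

lemma mean_square_y_le: "(\<Sum>r<n. (y r)\<^sup>2) / real n \<le> Cy\<^sup>2"
proof -
  have "(y r)\<^sup>2 \<le> Cy\<^sup>2" if "r < n" for r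
    using y_bound[OF that] by (auto simp: power2_le_iff_abs_le)
  then have "(\<Sum>r<n. (y r)\<^sup>2) \<le> real n * Cy\<^sup>2"
    using sum_bounded_above[of "{..<n}" "\<lambda>r. (y r)\<^sup>2" "Cy\<^sup>2"] by simp
  then show ?thesis by (cases "n = 0") (simp_all add: field_simps)
qed

lemma good_0: "good 0 W"
proof -
  have "(z0 r - u0 r)\<^sup>2 \<le> (Cz + Cu)\<^sup>2" "(u0 r)\<^sup>2 \<le> (Cz + Cu)\<^sup>2" if "r < m" for r
  proof -
    have "\<bar>z0 r - u0 r\<bar> \<le> Cz + Cu" "\<bar>u0 r\<bar> \<le> Cz + Cu"
      using z0_bound[OF that] u0_bound[OF that] z0_bound[OF m_pos] abs_triangle_ineq4[of "z0 r" "u0 r"]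
      by linarith+
    then show "(z0 r - u0 r)\<^sup>2 \<le> (Cz + Cu)\<^sup>2" "(u0 r)\<^sup>2 \<le> (Cz + Cu)\<^sup>2"
      by (auto simp: power2_le_iff_abs_le)
  qed
  then have sums: "(\<Sum>r<m. (z0 r - u0 r)\<^sup>2) \<le> m * (Cz + Cu)\<^sup>2" "(\<Sum>r<m. (u0 r)\<^sup>2) \<le> m * (Cz + Cu)\<^sup>2"
    using sum_bounded_above[of "{..<m}" "\<lambda>r. (z0 r - u0 r)\<^sup>2" "(Cz + Cu)\<^sup>2"]
      sum_bounded_above[of "{..<m}" "\<lambda>r. (u0 r)\<^sup>2" "(Cz + Cu)\<^sup>2"] by simp_all
  have "(Cz + Cu)\<^sup>2 \<le> B 0"
    using var_bound_ge[of Cy Cz Cu 0] zero_le_power2[of Cy] by linarith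
  then have "m * (Cz + Cu)\<^sup>2 \<le> m * B 0" by (intro mult_left_mono) auto
  moreover have "(\<Sum>r<m. (z0 r - u0 r)\<^sup>2) / m \<le> (Cz + Cu)\<^sup>2"
    using sums(1) m_pos by (simp add: divide_le_eq mult.commute)
  ultimately show ?thesis
    using sums(2) mean_square_y_le var_bound_ge[of Cy Cz Cu 0] by (simp add: good_def x_var_def Z_0 U_0)
qed

lemma good_Suc:
  assumes good: "good k W" and X_small: "(\<Sum>r<m. (X (Suc k) W r)\<^sup>2) \<le> 4 * m * B k"
  shows "good (Suc k) W"
proof -
  have "18 * ((\<Sum>r<m. (U k W r)\<^sup>2) + (\<Sum>r<m. (X (Suc k) W r)\<^sup>2)) \<le> m * (90 * B k)"
    using good X_small by (simp add: good_def)
  then have U_sum: "(\<Sum>r<m. (U (Suc k) W r)\<^sup>2) \<le> m * (90 * B k)"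
    and ZU_sum: "(\<Sum>r<m. (Z (Suc k) W r - U (Suc k) W r)\<^sup>2) / m \<le> 90 * B k"
    using sum_square_U_Suc_le[of W k] sum_square_ZU_Suc_le[of W k] m_pos
    by (simp_all add: divide_le_eq mult.commute)
  have "m * (90 * B k) \<le> m * B (Suc k)"
    using one_le_var_bound[of Cy Cz Cu k] by (intro mult_left_mono) (auto simp: var_bound_Suc)
  moreover have "Cy\<^sup>2 \<le> B k"
    using var_bound_ge[of Cy Cz Cu k] zero_le_power2[of "Cz + Cu"] by linarith
  then have "x_var (Suc (Suc k)) W \<le> B (Suc k)"
    using mean_square_y_le ZU_sum by (simp add: x_var_def var_bound_Suc)
  ultimately show ?thesis using U_sum by (simp add: good_def)
qed

lemma good_eq_off_row:
  assumes "\<And>j. j \<notin> row (Suc k) i \<Longrightarrow> W j = W' j"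
  shows "good k W = good k W'"
  using ZU_eq_off_row[OF assms] by (simp add: good_def x_var_def)

abbreviation good_set :: "nat \<Rightarrow> (nat \<times> nat \<times> nat \<times> nat \<Rightarrow> real) set" where
  "good_set k \<equiv> {W \<in> space (weight_space L n m). good k W}"

definition good_exp :: "nat \<Rightarrow> nat set \<Rightarrow> (nat \<times> nat \<times> nat \<times> nat \<Rightarrow> real) \<Rightarrow> ennreal" where
  "good_exp k R W = ennreal (exp ((\<Sum>r\<in>R. (X (Suc k) W r)\<^sup>2) / (4 * B k))) * indicator (good_set k) W"

lemma measurable_good_exp [measurable]: "good_exp k R \<in> borel_measurable (weight_space L n m)"
  unfolding good_exp_def weight_space_eq_gaussians by measurable

lemma good_exp_insert:
  "finite R \<Longrightarrow> q \<notin> R \<Longrightarrow> good_exp k (insert q R) W = good_exp k R W * ennreal (exp ((X (Suc k) W q)\<^sup>2 / (4 * B k)))"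
  by (simp add: good_exp_def add_divide_distrib exp_add ennreal_mult' mult_ac)

lemma good_exp_eq_off_row:
  assumes kL: "Suc k \<le> L" and q: "q < m" "q \<notin> R" and off_row: "\<And>j. j \<notin> row (Suc k) q \<Longrightarrow> W j = W' j"
  shows "good_exp k R W = good_exp k R W'"
proof -
  have "W j = W' j" if "j \<notin> weight_idx L n m" for j
    using that row_subset_weight_idx[OF kL q(1)] by (intro off_row) auto
  then have "W \<in> space (weight_space L n m) \<longleftrightarrow> W' \<in> space (weight_space L n m)"
    by (simp add: weight_space_eq_gaussians space_PiM PiE_def extensional_def)
  moreover have "X (Suc k) W r = X (Suc k) W' r" if "r \<in> R" for r
    using q(2) that by (intro X_eq_off_row[OF off_row]) auto
  ultimately show ?thesis
    by (simp add: good_exp_def good_eq_off_row[OF off_row] indicator_def)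
qed

lemma nn_integral_good_exp_le:
  assumes kL: "Suc k \<le> L" and R: "R \<subseteq> {..<m}"
  shows "integral\<^sup>N (weight_space L n m) (good_exp k R) \<le> ennreal (sqrt 2) ^ card R"
proof -
  have "finite R" using R finite_subset by blast
  then show ?thesis
    using R
  proof (induction R rule: finite_induct)
    case empty
    have "good_set k \<in> sets (weight_space L n m)" by (simp add: weight_space_eq_gaussians)
    then show ?case by (simp add: good_exp_def weights.emeasure_le_1)
  next
    case (insert q R)
    let ?I = "weight_idx L n m" and ?J = "row (Suc k) q"
    have "integral\<^sup>N (weight_space L n m) (good_exp k (insert q R))
        = (\<integral>\<^sup>+W. good_exp k R W * ennreal (exp ((\<Sum>j\<in>?J. row_coef (Suc k) W j * W j)\<^sup>2 / (4 * B k)))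
            \<partial>gaussians ?I)"
      unfolding weight_space_eq_gaussians using insert.hyps
      by (intro nn_integral_cong) (simp add: good_exp_insert X_eq_sum_row)
    also have "\<dots> \<le> ennreal (sqrt 2) * integral\<^sup>N (gaussians ?I) (good_exp k R)"
    proof (rule nn_integral_exp_square_conditional_le)
      show "finite ?I" by (rule finite_weight_idx)
      show "?J \<subseteq> ?I" using kL insert.prems by (intro row_subset_weight_idx) auto
      show "good_exp k R \<in> borel_measurable (gaussians ?I)"
        using measurable_good_exp by (simp add: weight_space_eq_gaussians)
      show "(\<lambda>W. \<Sum>j\<in>?J. row_coef (Suc k) W j * W j) \<in> borel_measurable (gaussians ?I)"
        unfolding X_eq_sum_row[symmetric] by measurable
    next
      fix \<omega> \<omega>' :: "nat \<times> nat \<times> nat \<times> nat \<Rightarrow> real"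
      assume "\<forall>j. j \<notin> ?J \<longrightarrow> \<omega> j = \<omega>' j"
      then have off_row: "\<And>j. j \<notin> ?J \<Longrightarrow> \<omega> j = \<omega>' j" by blast
      show "good_exp k R \<omega> = good_exp k R \<omega>'"
        using kL insert off_row by (intro good_exp_eq_off_row) auto
      show "row_coef (Suc k) \<omega> = row_coef (Suc k) \<omega>'"
        by (rule row_coef_eq_off_row[OF off_row])
    next
      fix \<omega> assume "good_exp k R \<omega> \<noteq> 0"
      then have "good k \<omega>" by (simp add: good_exp_def indicator_def split: if_splits)
      then show "(\<Sum>j\<in>?J. (row_coef (Suc k) \<omega> j)\<^sup>2) \<le> B k"
        by (simp add: sum_row_coef_square good_def)
    qed
    also have "\<dots> \<le> ennreal (sqrt 2) * ennreal (sqrt 2) ^ card R"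
      using insert by (intro mult_left_mono) (simp_all add: weight_space_eq_gaussians)
    finally show ?case using insert.hyps by simp
  qed
qed

lemma prob_good_sum_square_X_large:
  assumes kL: "Suc k \<le> L"
  shows "\<P>(W in weight_space L n m. good k W \<and> 4 * real m * B k < (\<Sum>r<m. (X (Suc k) W r)\<^sup>2))
    \<le> exp (- real m / 2)"
proof -
  let ?f = "\<lambda>W. \<Sum>r<m. (X (Suc k) W r)\<^sup>2"
  have B: "0 < B k" using one_le_var_bound[of Cy Cz Cu k] by simp
  have "emeasure (weight_space L n m) {W \<in> space (weight_space L n m). good k W \<and> 4 * real m * B k < ?f W}
      \<le> emeasure (weight_space L n m) {W \<in> good_set k. 4 * real m * B k \<le> ?f W}"
    by (rule emeasure_mono) (auto simp: weight_space_eq_gaussians)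
  also have "\<dots> \<le> ennreal (exp (- (1 / (4 * B k)) * (4 * real m * B k)))
        * (\<integral>\<^sup>+W. ennreal (exp (1 / (4 * B k) * ?f W)) * indicator (good_set k) W \<partial>weight_space L n m)"
    using B by (intro Chernoff_ineq_nn_integral_ge) (simp_all add: weight_space_eq_gaussians)
  also have "\<dots> \<le> ennreal (exp (- real m)) * ennreal (sqrt 2) ^ m"
    using nn_integral_good_exp_le[OF kL, of "{..<m}"] B by (intro mult_mono) (simp_all add: good_exp_def[abs_def])
  also have "\<dots> \<le> ennreal (exp (- real m / 2))"
    using sqrt2_power_mult_exp_le[of m] by (simp add: ennreal_power ennreal_mult'[symmetric] mult.commute)
  finally show ?thesis by (simp add: weights.emeasure_eq_measure)
qed

lemma prob_not_good:
  assumes "k \<le> L"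
  shows "\<P>(W in weight_space L n m. \<not> good k W) \<le> k * exp (- real m / 2)"
  using assms
proof (induction k)
  case 0
  then show ?case by (simp add: good_0)
next
  case (Suc k)
  have "{W \<in> space (weight_space L n m). \<not> good (Suc k) W}
      \<subseteq> {W \<in> space (weight_space L n m). \<not> good k W}
        \<union> {W \<in> space (weight_space L n m). good k W \<and> 4 * real m * B k < (\<Sum>r<m. (X (Suc k) W r)\<^sup>2)}"
    using good_Suc by force
  then have "\<P>(W in weight_space L n m. \<not> good (Suc k) W)
      \<le> measure (weight_space L n m) ({W \<in> space (weight_space L n m). \<not> good k W}
        \<union> {W \<in> space (weight_space L n m). good k W \<and> 4 * real m * B k < (\<Sum>r<m. (X (Suc k) W r)\<^sup>2)})"
    by (rule weights.finite_measure_mono) (simp add: weight_space_eq_gaussians)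
  also have "\<dots> \<le> \<P>(W in weight_space L n m. \<not> good k W)
        + \<P>(W in weight_space L n m. good k W \<and> 4 * real m * B k < (\<Sum>r<m. (X (Suc k) W r)\<^sup>2))"
    by (intro measure_Un_le) (simp_all add: weight_space_eq_gaussians)
  also have "\<dots> \<le> k * exp (- real m / 2) + exp (- real m / 2)"
    using Suc prob_good_sum_square_X_large[of k] by (intro add_mono) simp_all
  finally show ?case by (simp add: algebra_simps)
qed

lemma prob_good_X_large:
  assumes kL: "Suc k \<le> L" and i: "i < m" and t: "0 \<le> t"
  shows "\<P>(W in weight_space L n m. good k W \<and> t < \<bar>X (Suc k) W i\<bar>)
    \<le> sqrt 2 * exp (- t\<^sup>2 / (4 * B k))"
proof -
  have B: "0 < B k" using one_le_var_bound[of Cy Cz Cu k] by simp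
  have "emeasure (weight_space L n m) {W \<in> space (weight_space L n m). good k W \<and> t < \<bar>X (Suc k) W i\<bar>}
      \<le> emeasure (weight_space L n m) {W \<in> good_set k. t\<^sup>2 \<le> (X (Suc k) W i)\<^sup>2}"
    using t by (intro emeasure_mono) (auto simp: weight_space_eq_gaussians abs_le_square_iff[symmetric])
  also have "\<dots> \<le> ennreal (exp (- (1 / (4 * B k)) * t\<^sup>2))
        * (\<integral>\<^sup>+W. ennreal (exp (1 / (4 * B k) * (X (Suc k) W i)\<^sup>2)) * indicator (good_set k) W \<partial>weight_space L n m)"
    using B by (intro Chernoff_ineq_nn_integral_ge) (simp_all add: weight_space_eq_gaussians)
  also have "\<dots> \<le> ennreal (exp (- t\<^sup>2 / (4 * B k))) * ennreal (sqrt 2)"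
    using nn_integral_good_exp_le[OF kL, of "{i}"] i by (intro mult_mono) (simp_all add: good_exp_def[abs_def])
  finally show ?thesis by (simp add: weights.emeasure_eq_measure ennreal_mult'[symmetric] mult.commute)
qed

lemma prob_X_large:
  assumes kL: "Suc k \<le> L" and i: "i < m" and t: "0 \<le> t"
  shows "\<P>(W in weight_space L n m. t < \<bar>X (Suc k) W i\<bar>)
    \<le> k * exp (- real m / 2) + sqrt 2 * exp (- t\<^sup>2 / (4 * B k))"
proof -
  have "\<P>(W in weight_space L n m. t < \<bar>X (Suc k) W i\<bar>)
      \<le> measure (weight_space L n m) ({W \<in> space (weight_space L n m). \<not> good k W}
          \<union> {W \<in> space (weight_space L n m). good k W \<and> t < \<bar>X (Suc k) W i\<bar>})"
    by (intro weights.finite_measure_mono) (auto simp: weight_space_eq_gaussians)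
  also have "\<dots> \<le> \<P>(W in weight_space L n m. \<not> good k W)
      + \<P>(W in weight_space L n m. good k W \<and> t < \<bar>X (Suc k) W i\<bar>)"
    by (intro measure_Un_le) (simp_all add: weight_space_eq_gaussians)
  also have "\<dots> \<le> k * exp (- real m / 2) + sqrt 2 * exp (- t\<^sup>2 / (4 * B k))"
    using prob_not_good[of k] prob_good_X_large[OF assms] kL by (intro add_mono) simp_all
  finally show ?thesis .
qed

lemma prob_X_le_ln:
  assumes kL: "Suc k \<le> L" and i: "i < m"
  shows "1 - 2 * exp (- (1 / (32 * (real k + 1) * B k)) * (ln m)\<^sup>2)
    \<le> \<P>(W in weight_space L n m. \<bar>X (Suc k) W i\<bar> \<le> ln m)"
proof -
  let ?large = "{W \<in> space (weight_space L n m). ln m < \<bar>X (Suc k) W i\<bar>}"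
  have "measure (weight_space L n m) ?large \<le> 2 * exp (- (1 / (32 * (real k + 1) * B k)) * (ln m)\<^sup>2)"
    using i one_le_var_bound[of Cy Cz Cu k] prob_X_large[OF kL i, of "ln m"]
    by (intro tail_sum_le_two_exp) simp_all
  moreover have "{W \<in> space (weight_space L n m). \<bar>X (Suc k) W i\<bar> \<le> ln m} = space (weight_space L n m) - ?large"
    by auto
  moreover have "measure (weight_space L n m) (space (weight_space L n m) - ?large)
      = 1 - measure (weight_space L n m) ?large"
    by (rule weights.prob_compl) (simp add: weight_space_eq_gaussians)
  ultimately show ?thesis by simp
qed

lemma prob_layer_bounds:
  assumes kL: "Suc k \<le> L" and i: "i < m" and Lsig: "1 \<le> Lsig"
  shows "1 - 2 * exp (- (1 / (32 * (real k + 1) * B k)) * (ln m)\<^sup>2)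
      \<le> \<P>(W in weight_space L n m. \<bar>Z (Suc k) W i\<bar> \<le> ln m + Lsig * \<bar>U k W i\<bar> + \<bar>act lam 0\<bar>)"
    and "1 - 2 * exp (- (1 / (32 * (real k + 1) * B k)) * (ln m)\<^sup>2)
      \<le> \<P>(W in weight_space L n m. \<bar>U (Suc k) W i\<bar> \<le> ln m + \<bar>U k W i\<bar> + \<bar>Z (Suc k) W i\<bar>)"
proof -
  have "{W \<in> space (weight_space L n m). \<bar>X (Suc k) W i\<bar> \<le> ln m}
      \<subseteq> {W \<in> space (weight_space L n m). \<bar>Z (Suc k) W i\<bar> \<le> ln m + Lsig * \<bar>U k W i\<bar> + \<bar>act lam 0\<bar>}"
    "{W \<in> space (weight_space L n m). \<bar>X (Suc k) W i\<bar> \<le> ln m}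
      \<subseteq> {W \<in> space (weight_space L n m). \<bar>U (Suc k) W i\<bar> \<le> ln m + \<bar>U k W i\<bar> + \<bar>Z (Suc k) W i\<bar>}"
    using abs_ZU_Suc_le[OF Lsig] by auto
  from this[THEN weights.finite_measure_mono] prob_X_le_ln[OF kL i]
  show "1 - 2 * exp (- (1 / (32 * (real k + 1) * B k)) * (ln m)\<^sup>2)
      \<le> \<P>(W in weight_space L n m. \<bar>Z (Suc k) W i\<bar> \<le> ln m + Lsig * \<bar>U k W i\<bar> + \<bar>act lam 0\<bar>)"
    and "1 - 2 * exp (- (1 / (32 * (real k + 1) * B k)) * (ln m)\<^sup>2)
      \<le> \<P>(W in weight_space L n m. \<bar>U (Suc k) W i\<bar> \<le> ln m + \<bar>U k W i\<bar> + \<bar>Z (Suc k) W i\<bar>)"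
    by (simp_all add: weight_space_eq_gaussians)
qed

end

theorem lemma9:
  fixes lam Lsig Cy Cz Cu :: real and n L l :: nat
  assumes "lam > 0"
    and "Lsig-lipschitz_on UNIV (act lam)"
    and "1 \<le> l" and "l \<le> L"
  shows "\<exists>cz > 0. \<exists>cu > 0. \<forall>m y z0 u0 i.
     (\<forall>k<n. \<bar>y k\<bar> \<le> Cy) \<longrightarrow> (\<forall>k<m. \<bar>z0 k\<bar> \<le> Cz) \<longrightarrow> (\<forall>k<m. \<bar>u0 k\<bar> \<le> Cu) \<longrightarrow> i < m \<longrightarrow>
     measure (weight_space L n m)
       {W \<in> space (weight_space L n m).
          \<bar>zl lam n m y z0 u0 W l i\<bar> \<le> ln (real m) + Lsig * \<bar>ul lam n m y z0 u0 W (l - 1) i\<bar> + \<bar>act lam 0\<bar>}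
       \<ge> 1 - 2 * exp (- cz * (ln (real m))\<^sup>2)
   \<and> measure (weight_space L n m)
       {W \<in> space (weight_space L n m).
          \<bar>ul lam n m y z0 u0 W l i\<bar> \<le> ln (real m) + \<bar>ul lam n m y z0 u0 W (l - 1) i\<bar> + \<bar>zl lam n m y z0 u0 W l i\<bar>}
       \<ge> 1 - 2 * exp (- cu * (ln (real m))\<^sup>2)"
proof -
  have Lsig: "1 \<le> Lsig" using assms(1,2) by (rule lipschitz_act_ge_1)
  obtain k where l: "l = Suc k" and kL: "Suc k \<le> L" using assms(3,4) by (cases l) auto
  define c where "c = 1 / (32 * (real k + 1) * var_bound Cy Cz Cu k)"
  have "0 < c" using one_le_var_bound[of Cy Cz Cu k] by (simp add: c_def)
  moreover have "1 - 2 * exp (- c * (ln m)\<^sup>2) \<le> \<P>(W in weight_space L n m.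
        \<bar>zl lam n m y z0 u0 W l i\<bar> \<le> ln m + Lsig * \<bar>ul lam n m y z0 u0 W (l - 1) i\<bar> + \<bar>act lam 0\<bar>)
    \<and> 1 - 2 * exp (- c * (ln m)\<^sup>2) \<le> \<P>(W in weight_space L n m.
        \<bar>ul lam n m y z0 u0 W l i\<bar> \<le> ln m + \<bar>ul lam n m y z0 u0 W (l - 1) i\<bar> + \<bar>zl lam n m y z0 u0 W l i\<bar>)"
    if "\<forall>r<n. \<bar>y r\<bar> \<le> Cy" "\<forall>r<m. \<bar>z0 r\<bar> \<le> Cz" "\<forall>r<m. \<bar>u0 r\<bar> \<le> Cu" "i < m"
    for m y z0 u0 i
  proof -
    interpret admm_net_bounded lam n m L y z0 u0 Cy Cz Cu
      using assms(1) that by unfold_locales auto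
    show ?thesis using prob_layer_bounds[OF kL \<open>i < m\<close> Lsig] by (simp add: l c_def)
  qed
  ultimately show ?thesis by blast
qed

end
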